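(* Let $N\ge 3$ and $\boldsymbol\theta\in\mathbb{R}^N$, and let $|0_L\rangle,|1_L\rangle,P,Z_L$ be the dephasing code associated with $\boldsymbol\theta$. Then $|0_L\rangle$ and $|1_L\rangle$ are orthonormal, and for all $\mathbf v,\mathbf u\in\mathbb{R}^N$: $P(\mathbf v\cdot\mathbf Z)P=(\mathbf v\cdot\cos(2\boldsymbol\theta))\,Z_L$ and $P(\mathbf v\cdot\mathbf Z)(\mathbf u\cdot\mathbf Z)P\in\mathbb{R}P$, where $\cos$ is applied entrywise. In particular, if $\cos(2\boldsymbol\theta)\perp\mathrm{col}(C)$, then $PSP\in\mathbb{R}P$ for every $S$ in the Lindblad span $\mathfrak{S}$ of the dephasing model, and $PHP=\tfrac12(\boldsymbol{\mathfrak h}\cdot\cos(2\boldsymbol\theta))Z_L$.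
   Context: Qubits $1,\dots,N$; $Z_j$, $X_j$ denote the Pauli $Z$, $X$ operators on qubit $j$ of $(\mathbb{C}^2)^{\otimes N}$, with $Z|0\rangle=|0\rangle$, $Z|1\rangle=-|1\rangle$. For $\mathbf v\in\mathbb{R}^N$, $\mathbf v\cdot\mathbf Z:=\sum_j v_jZ_j$. Dephasing model: $\boldsymbol{\mathfrak h}\in\mathbb{R}^N$, $H=\tfrac12\boldsymbol{\mathfrak h}\cdot\mathbf Z$; $C$ is a real symmetric positive semidefinite $N\times N$ matrix with orthonormal eigenvectors $\mathbf v_1,\dots,\mathbf v_N$ and eigenvalues $\lambda_1,\dots,\lambda_N\ge0$; $L_j=\sqrt{\lambda_j}\,\mathbf v_j\cdot\mathbf Z$; $\mathrm{col}(C)$ and $\ker(C)$ are the column space and kernel of $C$; the Lindblad span $\mathfrak{S}$ is the real span of $I$, all $L_i$ and all $L_iL_j$. Dephasing code for $\boldsymbol\theta\in\mathbb{R}^N$: $|0_L\rangle=\bigotimes_{j=1}^N(\cos\theta_j|0\rangle+i\sin\theta_j|1\rangle)$, $|1_L\rangle=X^{\otimes N}|0_L\rangle$, $P=|0_L\rangle\langle0_L|+|1_L\rangle\langle1_L|$, $Z_L=|0_L\rangle\langle0_L|-|1_L\rangle\langle1_L|$. *)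

theory Defs
  imports "HOL-Analysis.Analysis" "Jordan_Normal_Form.Matrix"
begin

(* Conventions: qubits are indexed 0..N-1 (qubit j+1 of the paper is index j here).
   The Hilbert space (C^2)^{\<otimes>N} is C^(2^N); computational basis state |b_0 ... b_{N-1}>
   has index i with b_j = bit j of i. Vectors in R^N are functions nat \<Rightarrow> real
   (only indices j < N matter). *)

definition qbit :: "nat \<Rightarrow> nat \<Rightarrow> bool" where
  "qbit i j = odd (i div 2 ^ j)"

definition Zop :: "nat \<Rightarrow> nat \<Rightarrow> complex mat" where
  "Zop N j = mat (2^N) (2^N) (\<lambda>(r, c). if r = c then (if qbit r j then -1 else 1) else 0)"

(* X^{\<otimes>N}: <r|X^{\<otimes>N}|c> = prod_j <r_j|X|c_j> = 1 iff all bits differ *)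
definition Xall :: "nat \<Rightarrow> complex mat" where
  "Xall N = mat (2^N) (2^N) (\<lambda>(r, c). if (\<forall>j<N. qbit r j \<noteq> qbit c j) then 1 else 0)"

definition vdotZ :: "nat \<Rightarrow> (nat \<Rightarrow> real) \<Rightarrow> complex mat" where
  "vdotZ N v = mat (2^N) (2^N) (\<lambda>(r, c). \<Sum>j<N. complex_of_real (v j) * (Zop N j $$ (r, c)))"

definition rdot :: "nat \<Rightarrow> (nat \<Rightarrow> real) \<Rightarrow> (nat \<Rightarrow> real) \<Rightarrow> real" where
  "rdot N v u = (\<Sum>j<N. v j * u j)"

(* |0_L> = tensor_j (cos theta_j |0> + i sin theta_j |1>) *)
definition ket0L :: "nat \<Rightarrow> (nat \<Rightarrow> real) \<Rightarrow> complex vec" where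
  "ket0L N \<theta> = vec (2^N) (\<lambda>i. \<Prod>j<N. if qbit i j then \<i> * complex_of_real (sin (\<theta> j))
                                          else complex_of_real (cos (\<theta> j)))"

definition ket1L :: "nat \<Rightarrow> (nat \<Rightarrow> real) \<Rightarrow> complex vec" where
  "ket1L N \<theta> = Xall N *\<^sub>v ket0L N \<theta>"

definition braket :: "complex vec \<Rightarrow> complex vec \<Rightarrow> complex" where
  "braket a b = (\<Sum>i<dim_vec a. cnj (a $ i) * b $ i)"

definition ketbra :: "complex vec \<Rightarrow> complex vec \<Rightarrow> complex mat" where
  "ketbra a b = mat (dim_vec a) (dim_vec b) (\<lambda>(r, c). a $ r * cnj (b $ c))"

definition codeP :: "nat \<Rightarrow> (nat \<Rightarrow> real) \<Rightarrow> complex mat" where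
  "codeP N \<theta> = ketbra (ket0L N \<theta>) (ket0L N \<theta>) + ketbra (ket1L N \<theta>) (ket1L N \<theta>)"

definition codeZL :: "nat \<Rightarrow> (nat \<Rightarrow> real) \<Rightarrow> complex mat" where
  "codeZL N \<theta> = ketbra (ket0L N \<theta>) (ket0L N \<theta>) - ketbra (ket1L N \<theta>) (ket1L N \<theta>)"

definition hamH :: "nat \<Rightarrow> (nat \<Rightarrow> real) \<Rightarrow> complex mat" where
  "hamH N h = complex_of_real (1/2) \<cdot>\<^sub>m vdotZ N h"

(* Lindblad operators L_k = sqrt(lambda_k) v_k . Z, where V k is the k-th eigenvector *)
definition lindL :: "nat \<Rightarrow> (nat \<Rightarrow> real) \<Rightarrow> (nat \<Rightarrow> nat \<Rightarrow> real) \<Rightarrow> nat \<Rightarrow> complex mat" where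
  "lindL N lam V k = complex_of_real (sqrt (lam k)) \<cdot>\<^sub>m vdotZ N (V k)"

inductive_set lindblad_span :: "nat \<Rightarrow> (nat \<Rightarrow> real) \<Rightarrow> (nat \<Rightarrow> nat \<Rightarrow> real) \<Rightarrow> complex mat set"
  for N lam V where
  zero: "0\<^sub>m (2^N) (2^N) \<in> lindblad_span N lam V"
| ident: "1\<^sub>m (2^N) \<in> lindblad_span N lam V"
| lin: "i < N \<Longrightarrow> lindL N lam V i \<in> lindblad_span N lam V"
| quad: "i < N \<Longrightarrow> j < N \<Longrightarrow> lindL N lam V i * lindL N lam V j \<in> lindblad_span N lam V"
| add: "S \<in> lindblad_span N lam V \<Longrightarrow> T \<in> lindblad_span N lam V \<Longrightarrow> S + T \<in> lindblad_span N lam V"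
| smult: "S \<in> lindblad_span N lam V \<Longrightarrow> complex_of_real r \<cdot>\<^sub>m S \<in> lindblad_span N lam V"

definition matvec :: "nat \<Rightarrow> (nat \<Rightarrow> nat \<Rightarrow> real) \<Rightarrow> (nat \<Rightarrow> real) \<Rightarrow> (nat \<Rightarrow> real)" where
  "matvec N C x = (\<lambda>i. \<Sum>j<N. C i j * x j)"

definition colspace :: "nat \<Rightarrow> (nat \<Rightarrow> nat \<Rightarrow> real) \<Rightarrow> (nat \<Rightarrow> real) set" where
  "colspace N C = {matvec N C x | x. True}"

end

theory Submission
  imports Defs
begin

text \<open>Both code states are product states and every operator involved is diagonal in the
computational basis, so each matrix element \<open>\<langle>x|D|y\<rangle>\<close> factorises over the qubits. For a
Pauli product \<open>Z\<^sub>A\<close> of the \<open>Z\<^sub>l\<close> with \<open>l \<in> A\<close>, a qubit \<open>l \<in> A\<close> contributes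
\<open>cos 2\<theta>\<^sub>l\<close> to \<open>\<langle>0\<^sub>L|Z\<^sub>A|0\<^sub>L\<rangle>\<close> and \<open>-cos 2\<theta>\<^sub>l\<close> to \<open>\<langle>1\<^sub>L|Z\<^sub>A|1\<^sub>L\<rangle>\<close>, while a
qubit \<open>l \<notin> A\<close> contributes a vanishing factor to \<open>\<langle>0\<^sub>L|Z\<^sub>A|1\<^sub>L\<rangle>\<close>. As \<open>|A| \<le> 2 < N\<close>
for \<open>Z\<^sub>j\<close> and \<open>Z\<^sub>jZ\<^sub>k\<close>, the compression \<open>P Z\<^sub>A P\<close> is a combination of
\<open>|0\<^sub>L\<rangle>\<langle>0\<^sub>L|\<close> and \<open>|1\<^sub>L\<rangle>\<langle>1\<^sub>L|\<close>, with opposite coefficients for \<open>Z\<^sub>j\<close> and equal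
ones for \<open>Z\<^sub>jZ\<^sub>k\<close>. An eigenvector \<open>v\<^sub>k\<close> of \<open>C\<close> with \<open>\<lambda>\<^sub>k \<noteq> 0\<close> lies in
\<open>col(C)\<close>, so \<open>P L\<^sub>k P = 0\<close>.\<close>

no_notation vec_nth (infixl "$" 90)

lemma not_qbit_top: "i < 2^N \<Longrightarrow> \<not> qbit i N"
  by (simp add: qbit_def)

lemma qbit_add_pow2_top: "i < 2^N \<Longrightarrow> qbit (i + 2^N) N"
  by (simp add: qbit_def)

lemma qbit_add_pow2:
  assumes "j < N"
  shows "qbit (i + 2^N) j = qbit i j"
proof -
  have "(2::nat)^N = 2^(N-j) * 2^j" using assms by (simp add: power_add[symmetric])
  then have "(i + 2^N) div 2^j = i div 2^j + 2^(N-j)" by simp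
  moreover have "even ((2::nat)^(N-j))" using assms by simp
  ultimately show ?thesis by (simp add: qbit_def)
qed

lemma sum_pow2_split:
  fixes g :: "nat \<Rightarrow> 'a::comm_monoid_add"
  shows "(\<Sum>i<2^Suc N. g i) = (\<Sum>i<2^N. g i) + (\<Sum>i<2^N. g (i + 2^N))"
proof -
  have "(\<Sum>i<2^Suc N. g i) = sum g {0..<2^N} + sum g {2^N..<2^N+2^N}"
    by (subst sum.atLeastLessThan_concat) (auto simp: lessThan_atLeast0 mult_2)
  also have "sum g {2^N..<2^N+2^N} = (\<Sum>i<2^N. g (i + 2^N))"
    using sum.shift_bounds_nat_ivl[of g 0 "2^N" "2^N"] by (simp add: lessThan_atLeast0)
  finally show ?thesis by (simp add: lessThan_atLeast0)
qed

lemma sum_prod_qbit: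
  fixes f :: "nat \<Rightarrow> bool \<Rightarrow> 'a::comm_semiring_1"
  shows "(\<Sum>i<2^N. \<Prod>j<N. f j (qbit i j)) = (\<Prod>j<N. f j False + f j True)"
proof (induction N)
  case 0
  then show ?case by simp
next
  case (Suc N)
  have "(\<Sum>i<2^Suc N. \<Prod>j<Suc N. f j (qbit i j))
      = (\<Sum>i<2^N. \<Prod>j<N. f j (qbit i j)) * f N False
        + (\<Sum>i<2^N. \<Prod>j<N. f j (qbit i j)) * f N True"
    unfolding sum_pow2_split by (simp add: sum_distrib_right not_qbit_top qbit_add_pow2_top qbit_add_pow2)
  then show ?case by (simp add: Suc distrib_left)
qed

definition diag_braket :: "complex vec \<Rightarrow> (nat \<Rightarrow> complex) \<Rightarrow> complex vec \<Rightarrow> complex" where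
  "diag_braket x d y = (\<Sum>i<dim_vec x. cnj (x $ i) * d i * y $ i)"

lemma braket_eq_diag_braket: "braket x y = diag_braket x (\<lambda>_. 1) y"
  by (simp add: braket_def diag_braket_def)

lemma diag_braket_sum:
  "diag_braket x (\<lambda>i. \<Sum>j\<in>A. f j i) y = (\<Sum>j\<in>A. diag_braket x (f j) y)"
  unfolding diag_braket_def by (simp add: sum_distrib_left sum_distrib_right sum.swap[of _ A])

lemma diag_braket_scale:
  "diag_braket x (\<lambda>i. c * f i) y = c * diag_braket x f y"
  unfolding diag_braket_def by (simp add: sum_distrib_left algebra_simps)

lemma diag_braket_product_states:
  assumes "dim_vec x = 2^N"
    and "\<And>i. i < 2^N \<Longrightarrow> x $ i = (\<Prod>j<N. \<phi> j (qbit i j))"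
    and "\<And>i. i < 2^N \<Longrightarrow> y $ i = (\<Prod>j<N. \<psi> j (qbit i j))"
    and "\<And>i. i < 2^N \<Longrightarrow> d i = (\<Prod>j<N. \<delta> j (qbit i j))"
  shows "diag_braket x d y
       = (\<Prod>j<N. cnj (\<phi> j False) * \<delta> j False * \<psi> j False + cnj (\<phi> j True) * \<delta> j True * \<psi> j True)"
proof -
  have "diag_braket x d y = (\<Sum>i<2^N. \<Prod>j<N. cnj (\<phi> j (qbit i j)) * \<delta> j (qbit i j) * \<psi> j (qbit i j))"
    unfolding diag_braket_def by (rule sum.cong) (auto simp: assms cnj_prod prod.distrib)
  then show ?thesis
    using sum_prod_qbit[of "\<lambda>j b. cnj (\<phi> j b) * \<delta> j b * \<psi> j b" N] by simp
qed

lemma dim_ketbra [simp]: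
  "dim_row (ketbra a b) = dim_vec a" "dim_col (ketbra a b) = dim_vec b"
  by (simp_all add: ketbra_def)

lemma ketbra_pair_compress_diag:
  fixes a b :: "complex vec"
  assumes dims: "dim_vec a = n" "dim_vec b = n"
    and cross: "diag_braket a d b = 0" "diag_braket b d a = 0"
  shows "(ketbra a a + ketbra b b) * mat_diag n d * (ketbra a a + ketbra b b)
       = diag_braket a d a \<cdot>\<^sub>m ketbra a a + diag_braket b d b \<cdot>\<^sub>m ketbra b b"
proof (rule eq_matI)
  let ?P = "ketbra a a + ketbra b b"
  have P: "?P \<in> carrier_mat n n" using dims by (simp add: ketbra_def)
  fix r c assume "r < dim_row (diag_braket a d a \<cdot>\<^sub>m ketbra a a + diag_braket b d b \<cdot>\<^sub>m ketbra b b)"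
    "c < dim_col (diag_braket a d a \<cdot>\<^sub>m ketbra a a + diag_braket b d b \<cdot>\<^sub>m ketbra b b)"
  then have rc: "r < n" "c < n" using dims by (simp_all add: ketbra_def)
  have "(?P * mat_diag n d * ?P) $$ (r, c) = (\<Sum>l<n. ?P $$ (r, l) * d l * ?P $$ (l, c))"
    using dims rc by (simp add: mat_diag_mult_right[OF P] scalar_prod_def lessThan_atLeast0)
  also have "\<dots> = a $ r * cnj (a $ c) * diag_braket a d a + a $ r * cnj (b $ c) * diag_braket a d b
      + b $ r * cnj (a $ c) * diag_braket b d a + b $ r * cnj (b $ c) * diag_braket b d b"
    using dims rc
    by (simp add: diag_braket_def ketbra_def sum.distrib sum_distrib_left algebra_simps)
  finally show "(?P * mat_diag n d * ?P) $$ (r, c)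
      = (diag_braket a d a \<cdot>\<^sub>m ketbra a a + diag_braket b d b \<cdot>\<^sub>m ketbra b b) $$ (r, c)"
    using dims rc cross by (simp add: ketbra_def)
qed (use dims in \<open>simp_all add: ketbra_def\<close>)

definition code_amp :: "(nat \<Rightarrow> real) \<Rightarrow> nat \<Rightarrow> bool \<Rightarrow> complex" where
  "code_amp \<theta> j b = (if b then \<i> * of_real (sin (\<theta> j)) else of_real (cos (\<theta> j)))"

lemma dim_ket0L [simp]: "dim_vec (ket0L N \<theta>) = 2^N"
  by (simp add: ket0L_def)

lemma dim_ket1L [simp]: "dim_vec (ket1L N \<theta>) = 2^N"
  by (simp add: ket1L_def Xall_def)

lemma ket0L_nth: "i < 2^N \<Longrightarrow> ket0L N \<theta> $ i = (\<Prod>j<N. code_amp \<theta> j (qbit i j))"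
  by (simp add: ket0L_def code_amp_def)

lemma indicator_prod:
  "(if \<forall>j<(N::nat). P j then 1 else 0) = (\<Prod>j<N. if P j then 1 else (0::'a::comm_semiring_1))"
  by (auto intro!: prod_zero)

lemma ket1L_nth:
  assumes "i < 2^N"
  shows "ket1L N \<theta> $ i = (\<Prod>j<N. code_amp \<theta> j (\<not> qbit i j))"
proof -
  have "ket1L N \<theta> $ i
      = (\<Sum>k<2^N. (if \<forall>j<N. qbit i j \<noteq> qbit k j then 1 else 0) * (\<Prod>j<N. code_amp \<theta> j (qbit k j)))"
    using assms
    by (simp add: ket1L_def Xall_def mult_mat_vec_def scalar_prod_def ket0L_nth lessThan_atLeast0)
  also have "\<dots> = (\<Sum>k<2^N. \<Prod>j<N. (if qbit i j \<noteq> qbit k j then 1 else 0) * code_amp \<theta> j (qbit k j))"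
    by (simp add: prod.distrib indicator_prod)
  also have "\<dots> = (\<Prod>j<N. code_amp \<theta> j (\<not> qbit i j))"
    by (subst sum_prod_qbit) (rule prod.cong, auto)
  finally show ?thesis .
qed

definition pauliZ_diag :: "nat \<Rightarrow> nat set \<Rightarrow> nat \<Rightarrow> complex" where
  "pauliZ_diag N A i = (\<Prod>l<N. if l \<in> A \<and> qbit i l then -1 else 1)"

lemma ex_less_notin:
  assumes "finite B" "card B < N"
  obtains l where "l < N" "l \<notin> B"
proof -
  have "\<not> {..<N} \<subseteq> B"
    using assms card_mono[of B "{..<N}"] by auto
  then show ?thesis using that by auto
qed

lemma pauliZ_diag_empty: "pauliZ_diag N {} = (\<lambda>_. 1)"
  by (rule ext) (simp add: pauliZ_diag_def)

lemma pauliZ_diag_singleton: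
  assumes "j < N"
  shows "pauliZ_diag N {j} i = (if qbit i j then -1 else 1)"
proof -
  have "pauliZ_diag N {j} i = (\<Prod>l<N. if l = j then (if qbit i j then -1 else 1) else 1)"
    unfolding pauliZ_diag_def by (rule prod.cong) auto
  then show ?thesis using assms by simp
qed

lemma pauliZ_diag_mult:
  "pauliZ_diag N A i * pauliZ_diag N B i = pauliZ_diag N (sym_diff A B) i"
  unfolding pauliZ_diag_def prod.distrib[symmetric] by (rule prod.cong) auto

lemma code_amp_sign_factor:
  "cnj (code_amp \<theta> l b) * code_amp \<theta> l b
     + cnj (code_amp \<theta> l (\<not> b)) * (if z then -1 else 1) * code_amp \<theta> l (\<not> b)
   = (if z then of_real (if b then - cos (2 * \<theta> l) else cos (2 * \<theta> l)) else 1)"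
proof -
  have pythagoras: "complex_of_real (cos t) * complex_of_real (cos t)
      + complex_of_real (sin t) * complex_of_real (sin t) = 1" for t
    by (metis of_real_add of_real_mult of_real_1 sin_cos_squared_add3)
  have "cnj (code_amp \<theta> l b) * code_amp \<theta> l b
     + cnj (code_amp \<theta> l (\<not> b)) * (if z then -1 else 1) * code_amp \<theta> l (\<not> b)
    = of_real (if b then (sin (\<theta> l))\<^sup>2 + (if z then -1 else 1) * (cos (\<theta> l))\<^sup>2
               else (cos (\<theta> l))\<^sup>2 + (if z then -1 else 1) * (sin (\<theta> l))\<^sup>2)"
    by (cases b; cases z) (simp_all add: code_amp_def algebra_simps power2_eq_square pythagoras)
  then show ?thesis by (simp add: cos_double)
qed

lemma code_amp_cross_factor:
  "cnj (code_amp \<theta> l b) * code_amp \<theta> l (\<not> b) + cnj (code_amp \<theta> l (\<not> b)) * code_amp \<theta> l b = 0"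
  by (cases b) (simp_all add: code_amp_def)

lemma code_diag_brakets_pauliZ:
  assumes "A \<subseteq> {..<N}"
  shows "diag_braket (ket0L N \<theta>) (pauliZ_diag N A) (ket0L N \<theta>) = of_real (\<Prod>l\<in>A. cos (2 * \<theta> l))"
    and "diag_braket (ket1L N \<theta>) (pauliZ_diag N A) (ket1L N \<theta>) = of_real (\<Prod>l\<in>A. - cos (2 * \<theta> l))"
proof -
  let ?\<delta> = "\<lambda>l b. if l \<in> A \<and> b then -1 else 1"
  have restrict: "(\<Prod>l<N. if l \<in> A then of_real (f l) else 1) = of_real (\<Prod>l\<in>A. f l)"
    for f :: "nat \<Rightarrow> real"
    using assms by (simp add: prod.inter_restrict[symmetric] Int_absorb1)
  have "diag_braket (ket0L N \<theta>) (pauliZ_diag N A) (ket0L N \<theta>)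
      = (\<Prod>l<N. if l \<in> A then of_real (cos (2 * \<theta> l)) else 1)"
    by (subst diag_braket_product_states[where \<phi>="code_amp \<theta>" and \<psi>="code_amp \<theta>" and \<delta>="?\<delta>"])
      (auto simp: ket0L_nth pauliZ_diag_def code_amp_sign_factor[of \<theta> _ False, simplified]
            intro!: prod.cong)
  then show "diag_braket (ket0L N \<theta>) (pauliZ_diag N A) (ket0L N \<theta>) = of_real (\<Prod>l\<in>A. cos (2 * \<theta> l))"
    by (simp add: restrict)
  have "diag_braket (ket1L N \<theta>) (pauliZ_diag N A) (ket1L N \<theta>)
      = (\<Prod>l<N. if l \<in> A then of_real (- cos (2 * \<theta> l)) else 1)"
    by (subst diag_braket_product_states[where \<phi>="\<lambda>j b. code_amp \<theta> j (\<not> b)"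
          and \<psi>="\<lambda>j b. code_amp \<theta> j (\<not> b)" and \<delta>="?\<delta>"])
      (auto simp: ket1L_nth pauliZ_diag_def code_amp_sign_factor[of \<theta> _ True, simplified]
            intro!: prod.cong)
  then show "diag_braket (ket1L N \<theta>) (pauliZ_diag N A) (ket1L N \<theta>) = of_real (\<Prod>l\<in>A. - cos (2 * \<theta> l))"
    by (simp only: restrict)
qed

lemma code_cross_brakets_pauliZ:
  assumes "l < N" "l \<notin> A"
  shows "diag_braket (ket0L N \<theta>) (pauliZ_diag N A) (ket1L N \<theta>) = 0"
    and "diag_braket (ket1L N \<theta>) (pauliZ_diag N A) (ket0L N \<theta>) = 0"
proof -
  let ?\<delta> = "\<lambda>l b. if l \<in> A \<and> b then -1 else 1"
  show "diag_braket (ket0L N \<theta>) (pauliZ_diag N A) (ket1L N \<theta>) = 0"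
    by (subst diag_braket_product_states[where \<phi>="code_amp \<theta>"
          and \<psi>="\<lambda>j b. code_amp \<theta> j (\<not> b)" and \<delta>="?\<delta>"])
       (use assms code_amp_cross_factor[of \<theta> l False] in
          \<open>auto simp: ket0L_nth ket1L_nth pauliZ_diag_def prod_zero_iff\<close>)
  show "diag_braket (ket1L N \<theta>) (pauliZ_diag N A) (ket0L N \<theta>) = 0"
    by (subst diag_braket_product_states[where \<psi>="code_amp \<theta>"
          and \<phi>="\<lambda>j b. code_amp \<theta> j (\<not> b)" and \<delta>="?\<delta>"])
       (use assms code_amp_cross_factor[of \<theta> l True] in
          \<open>auto simp: ket0L_nth ket1L_nth pauliZ_diag_def prod_zero_iff\<close>)
qed

lemma code_orthonormal:
  assumes "N > 0"
  shows "braket (ket0L N \<theta>) (ket0L N \<theta>) = 1" "braket (ket1L N \<theta>) (ket1L N \<theta>) = 1"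
    "braket (ket0L N \<theta>) (ket1L N \<theta>) = 0" "braket (ket1L N \<theta>) (ket0L N \<theta>) = 0"
proof -
  show "braket (ket0L N \<theta>) (ket0L N \<theta>) = 1" "braket (ket1L N \<theta>) (ket1L N \<theta>) = 1"
    using code_diag_brakets_pauliZ[of "{}" N \<theta>] by (simp_all add: braket_eq_diag_braket pauliZ_diag_empty)
  show "braket (ket0L N \<theta>) (ket1L N \<theta>) = 0" "braket (ket1L N \<theta>) (ket0L N \<theta>) = 0"
    using code_cross_brakets_pauliZ[of 0 N "{}" \<theta>] assms by (simp_all add: braket_eq_diag_braket pauliZ_diag_empty)
qed

lemma codeP_compress_diag:
  assumes "diag_braket (ket0L N \<theta>) d (ket1L N \<theta>) = 0" "diag_braket (ket1L N \<theta>) d (ket0L N \<theta>) = 0"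
  shows "codeP N \<theta> * mat_diag (2^N) d * codeP N \<theta>
       = diag_braket (ket0L N \<theta>) d (ket0L N \<theta>) \<cdot>\<^sub>m ketbra (ket0L N \<theta>) (ket0L N \<theta>)
         + diag_braket (ket1L N \<theta>) d (ket1L N \<theta>) \<cdot>\<^sub>m ketbra (ket1L N \<theta>) (ket1L N \<theta>)"
  unfolding codeP_def by (rule ketbra_pair_compress_diag) (simp_all add: assms)

lemma codeP_compress_diag_codeZL:
  assumes "diag_braket (ket0L N \<theta>) d (ket1L N \<theta>) = 0" "diag_braket (ket1L N \<theta>) d (ket0L N \<theta>) = 0"
    and "diag_braket (ket0L N \<theta>) d (ket0L N \<theta>) = x" "diag_braket (ket1L N \<theta>) d (ket1L N \<theta>) = - x"
  shows "codeP N \<theta> * mat_diag (2^N) d * codeP N \<theta> = x \<cdot>\<^sub>m codeZL N \<theta>"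
  by (rule eq_matI) (simp_all add: codeP_compress_diag assms codeZL_def ketbra_def algebra_simps)

definition code_scalar_diag :: "nat \<Rightarrow> (nat \<Rightarrow> real) \<Rightarrow> (nat \<Rightarrow> complex) \<Rightarrow> bool" where
  "code_scalar_diag N \<theta> d \<longleftrightarrow>
     diag_braket (ket0L N \<theta>) d (ket1L N \<theta>) = 0 \<and> diag_braket (ket1L N \<theta>) d (ket0L N \<theta>) = 0 \<and>
     (\<exists>r::real. diag_braket (ket0L N \<theta>) d (ket0L N \<theta>) = r \<and> diag_braket (ket1L N \<theta>) d (ket1L N \<theta>) = r)"

lemma codeP_compress_code_scalar_diag:
  assumes "code_scalar_diag N \<theta> d"
  shows "\<exists>r::real. codeP N \<theta> * mat_diag (2^N) d * codeP N \<theta> = of_real r \<cdot>\<^sub>m codeP N \<theta>"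
proof -
  obtain r :: real where r: "diag_braket (ket0L N \<theta>) d (ket0L N \<theta>) = r"
      "diag_braket (ket1L N \<theta>) d (ket1L N \<theta>) = r"
    using assms by (auto simp: code_scalar_diag_def)
  have "codeP N \<theta> * mat_diag (2^N) d * codeP N \<theta>
      = of_real r \<cdot>\<^sub>m ketbra (ket0L N \<theta>) (ket0L N \<theta>) + of_real r \<cdot>\<^sub>m ketbra (ket1L N \<theta>) (ket1L N \<theta>)"
    using assms r by (simp add: codeP_compress_diag code_scalar_diag_def)
  also have "\<dots> = of_real r \<cdot>\<^sub>m codeP N \<theta>"
    unfolding codeP_def by (rule add_smult_distrib_left_mat[symmetric, of _ "2^N" "2^N"]) (simp_all add: ketbra_def)
  finally show ?thesis ..
qed

lemma diag_braket_add:
  "diag_braket x (\<lambda>i. d i + e i) y = diag_braket x d y + diag_braket x e y"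
  by (simp add: diag_braket_def algebra_simps sum.distrib)

lemma code_scalar_diag_zero: "code_scalar_diag N \<theta> (\<lambda>_. 0)"
  by (auto simp: code_scalar_diag_def diag_braket_def intro!: exI[of _ 0])

lemma code_scalar_diag_add:
  assumes "code_scalar_diag N \<theta> d" "code_scalar_diag N \<theta> e"
  shows "code_scalar_diag N \<theta> (\<lambda>i. d i + e i)"
proof -
  obtain r s :: real where "diag_braket (ket0L N \<theta>) d (ket0L N \<theta>) = r"
      "diag_braket (ket1L N \<theta>) d (ket1L N \<theta>) = r"
      "diag_braket (ket0L N \<theta>) e (ket0L N \<theta>) = s" "diag_braket (ket1L N \<theta>) e (ket1L N \<theta>) = s"
    using assms by (auto simp: code_scalar_diag_def)
  with assms show ?thesis
    by (auto simp: code_scalar_diag_def diag_braket_add intro!: exI[of _ "r + s"])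
qed

lemma code_scalar_diag_scale:
  assumes "code_scalar_diag N \<theta> d"
  shows "code_scalar_diag N \<theta> (\<lambda>i. of_real c * d i)"
proof -
  obtain r :: real where "diag_braket (ket0L N \<theta>) d (ket0L N \<theta>) = r"
      "diag_braket (ket1L N \<theta>) d (ket1L N \<theta>) = r"
    using assms by (auto simp: code_scalar_diag_def)
  with assms show ?thesis
    by (auto simp: code_scalar_diag_def diag_braket_scale intro!: exI[of _ "c * r"])
qed

lemma code_scalar_diag_sum:
  assumes "finite A" "\<And>j. j \<in> A \<Longrightarrow> code_scalar_diag N \<theta> (f j)"
  shows "code_scalar_diag N \<theta> (\<lambda>i. \<Sum>j\<in>A. f j i)"
  using assms
proof (induction A rule: finite_induct)
  case empty
  show ?case by (simp add: code_scalar_diag_zero)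
next
  case (insert j A)
  then show ?case by (simp add: code_scalar_diag_add)
qed

lemma code_scalar_diag_pauliZ:
  assumes "B \<subseteq> {..<N}" "even (card B)" "l < N" "l \<notin> B"
  shows "code_scalar_diag N \<theta> (pauliZ_diag N B)"
proof -
  have "(\<Prod>l\<in>B. - cos (2 * \<theta> l)) = (\<Prod>l\<in>B. cos (2 * \<theta> l))"
    using assms(2) by (simp add: prod_uminus)
  then show ?thesis
    using assms by (auto simp: code_scalar_diag_def code_diag_brakets_pauliZ code_cross_brakets_pauliZ
        simp del: of_real_prod)
qed

definition vdotZ_diag :: "nat \<Rightarrow> (nat \<Rightarrow> real) \<Rightarrow> nat \<Rightarrow> complex" where
  "vdotZ_diag N v i = (\<Sum>j<N. of_real (v j) * pauliZ_diag N {j} i)"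

lemma vdotZ_eq_mat_diag: "vdotZ N v = mat_diag (2^N) (vdotZ_diag N v)"
  by (rule eq_matI) (auto simp: vdotZ_def mat_diag_def Zop_def vdotZ_diag_def pauliZ_diag_singleton
      intro!: sum.cong)

lemma code_brakets_vdotZ:
  assumes "N \<ge> 2"
  shows "diag_braket (ket0L N \<theta>) (vdotZ_diag N v) (ket0L N \<theta>) = of_real (rdot N v (\<lambda>j. cos (2 * \<theta> j)))"
    and "diag_braket (ket1L N \<theta>) (vdotZ_diag N v) (ket1L N \<theta>) = - of_real (rdot N v (\<lambda>j. cos (2 * \<theta> j)))"
    and "diag_braket (ket0L N \<theta>) (vdotZ_diag N v) (ket1L N \<theta>) = 0"
    and "diag_braket (ket1L N \<theta>) (vdotZ_diag N v) (ket0L N \<theta>) = 0"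
proof -
  have cross: "diag_braket (ket0L N \<theta>) (pauliZ_diag N {j}) (ket1L N \<theta>) = 0
      \<and> diag_braket (ket1L N \<theta>) (pauliZ_diag N {j}) (ket0L N \<theta>) = 0" for j
  proof -
    obtain l where "l < N" "l \<notin> {j}"
      using ex_less_notin[of "{j}" N] assms by auto
    then show ?thesis by (simp add: code_cross_brakets_pauliZ)
  qed
  show "diag_braket (ket0L N \<theta>) (vdotZ_diag N v) (ket0L N \<theta>) = of_real (rdot N v (\<lambda>j. cos (2 * \<theta> j)))"
    "diag_braket (ket1L N \<theta>) (vdotZ_diag N v) (ket1L N \<theta>) = - of_real (rdot N v (\<lambda>j. cos (2 * \<theta> j)))"
    unfolding vdotZ_diag_def diag_braket_sum diag_braket_scale rdot_def
    by (simp_all add: code_diag_brakets_pauliZ sum_negf[symmetric])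
  show "diag_braket (ket0L N \<theta>) (vdotZ_diag N v) (ket1L N \<theta>) = 0"
    "diag_braket (ket1L N \<theta>) (vdotZ_diag N v) (ket0L N \<theta>) = 0"
    unfolding vdotZ_diag_def diag_braket_sum diag_braket_scale by (simp_all add: cross)
qed

lemma codeP_vdotZ_codeP:
  assumes "N \<ge> 2"
  shows "codeP N \<theta> * vdotZ N v * codeP N \<theta>
       = of_real (rdot N v (\<lambda>j. cos (2 * \<theta> j))) \<cdot>\<^sub>m codeZL N \<theta>"
  unfolding vdotZ_eq_mat_diag
  by (rule codeP_compress_diag_codeZL) (simp_all add: code_brakets_vdotZ assms)

lemma code_scalar_diag_pauliZ_pair:
  assumes "N \<ge> 3" "j < N" "k < N"
  shows "code_scalar_diag N \<theta> (\<lambda>i. pauliZ_diag N {j} i * pauliZ_diag N {k} i)"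
proof -
  have B: "sym_diff {j} {k} = (if j = k then {} else {j, k})" by auto
  then have "card (sym_diff {j} {k}) < N" using assms by simp
  then obtain l where "l < N" "l \<notin> sym_diff {j} {k}" using ex_less_notin[of "sym_diff {j} {k}" N] by auto
  moreover have "even (card (sym_diff {j} {k}))" using B by simp
  ultimately show ?thesis
    unfolding pauliZ_diag_mult using assms by (intro code_scalar_diag_pauliZ) auto
qed

lemma code_scalar_diag_vdotZ_vdotZ:
  assumes "N \<ge> 3"
  shows "code_scalar_diag N \<theta> (\<lambda>i. vdotZ_diag N v i * vdotZ_diag N u i)"
proof -
  have expand: "(\<lambda>i. vdotZ_diag N v i * vdotZ_diag N u i)
      = (\<lambda>i. \<Sum>j<N. \<Sum>k<N. of_real (v j * u k) * (pauliZ_diag N {j} i * pauliZ_diag N {k} i))"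
    by (rule ext) (simp only: vdotZ_diag_def sum_product, simp add: algebra_simps)
  show ?thesis
    unfolding expand
    by (intro code_scalar_diag_sum code_scalar_diag_scale code_scalar_diag_pauliZ_pair) (use assms in auto)
qed

lemma codeP_vdotZ_vdotZ_codeP:
  assumes "N \<ge> 3"
  shows "\<exists>r::real. codeP N \<theta> * vdotZ N v * vdotZ N u * codeP N \<theta> = of_real r \<cdot>\<^sub>m codeP N \<theta>"
proof -
  have "codeP N \<theta> * vdotZ N v * vdotZ N u
      = codeP N \<theta> * mat_diag (2^N) (\<lambda>i. vdotZ_diag N v i * vdotZ_diag N u i)"
    unfolding vdotZ_eq_mat_diag
    by (subst assoc_mult_mat[of _ "2^N" "2^N" _ "2^N" _ "2^N"]) (simp_all add: codeP_def ketbra_def)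
  then show ?thesis
    using codeP_compress_code_scalar_diag[OF code_scalar_diag_vdotZ_vdotZ[OF assms]] by simp
qed

lemma codeP_hamH_codeP:
  assumes "N \<ge> 2"
  shows "codeP N \<theta> * hamH N h * codeP N \<theta>
       = of_real (1/2 * rdot N h (\<lambda>j. cos (2 * \<theta> j))) \<cdot>\<^sub>m codeZL N \<theta>"
proof -
  have "hamH N h = mat_diag (2^N) (\<lambda>i. of_real (1/2) * vdotZ_diag N h i)"
    unfolding hamH_def vdotZ_eq_mat_diag by (rule eq_matI) (auto simp: mat_diag_def)
  then show ?thesis
    by (simp only:) (rule codeP_compress_diag_codeZL; simp only: diag_braket_scale code_brakets_vdotZ[OF assms]; simp)
qed

lemma eigvec_rdot_perp_colspace:
  assumes "\<forall>k<N. \<forall>i<N. matvec N C (V k) i = lam k * V k i"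
    and "\<forall>w \<in> colspace N C. rdot N c w = 0"
    and "k < N" "lam k \<noteq> 0"
  shows "rdot N (V k) c = 0"
proof -
  let ?w = "matvec N C (\<lambda>j. V k j / lam k)"
  have "?w j = V k j" if "j < N" for j
  proof -
    have "?w j = matvec N C (V k) j / lam k"
      by (simp add: matvec_def sum_divide_distrib)
    then show ?thesis using assms(1,3,4) that by simp
  qed
  then have "rdot N (V k) c = rdot N c ?w" by (auto simp: rdot_def mult.commute intro!: sum.cong)
  also have "\<dots> = 0" using assms(2) by (auto simp: colspace_def)
  finally show ?thesis .
qed

lemma lindL_eq_mat_diag:
  "lindL N lam V k = mat_diag (2^N) (\<lambda>i. of_real (sqrt (lam k)) * vdotZ_diag N (V k) i)"
  unfolding lindL_def vdotZ_eq_mat_diag by (rule eq_matI) (auto simp: mat_diag_def)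

lemma lindblad_span_code_scalar_diag:
  assumes N: "N \<ge> 3"
    and eig: "\<forall>k<N. \<forall>i<N. matvec N C (V k) i = lam k * V k i"
    and perp: "\<forall>w \<in> colspace N C. rdot N (\<lambda>j. cos (2 * \<theta> j)) w = 0"
    and S: "S \<in> lindblad_span N lam V"
  shows "\<exists>d. S = mat_diag (2^N) d \<and> code_scalar_diag N \<theta> d"
  using S
proof (induction rule: lindblad_span.induct)
  case zero
  have "0\<^sub>m (2^N) (2^N) = mat_diag (2^N) (\<lambda>_. 0)"
    by (rule eq_matI) (auto simp: mat_diag_def)
  then show ?case using code_scalar_diag_zero by blast
next
  case ident
  have "code_scalar_diag N \<theta> (pauliZ_diag N {})"
    using N by (intro code_scalar_diag_pauliZ[of _ _ 0]) auto
  then have "code_scalar_diag N \<theta> (\<lambda>_. 1)" by (simp only: pauliZ_diag_empty)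
  then show ?case by (metis mat_diag_one)
next
  case (lin k)
  let ?s = "sqrt (lam k)"
  have "?s * rdot N (V k) (\<lambda>j. cos (2 * \<theta> j)) = 0"
    using eigvec_rdot_perp_colspace[OF eig perp lin] by (cases "lam k = 0") auto
  then have "code_scalar_diag N \<theta> (\<lambda>i. of_real ?s * vdotZ_diag N (V k) i)"
    using N by (auto simp: code_scalar_diag_def diag_braket_scale code_brakets_vdotZ
        intro!: exI[of _ 0] simp flip: of_real_mult)
  then show ?case using lindL_eq_mat_diag by blast
next
  case (quad k l)
  let ?s = "sqrt (lam k) * sqrt (lam l)"
  have "lindL N lam V k * lindL N lam V l
      = mat_diag (2^N) (\<lambda>i. of_real ?s * (vdotZ_diag N (V k) i * vdotZ_diag N (V l) i))"
    by (simp add: lindL_eq_mat_diag algebra_simps)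
  moreover have "code_scalar_diag N \<theta> (\<lambda>i. of_real ?s * (vdotZ_diag N (V k) i * vdotZ_diag N (V l) i))"
    using N by (intro code_scalar_diag_scale code_scalar_diag_vdotZ_vdotZ)
  ultimately show ?case by blast
next
  case (add S T)
  then obtain d e where "S = mat_diag (2^N) d" "code_scalar_diag N \<theta> d"
      "T = mat_diag (2^N) e" "code_scalar_diag N \<theta> e" by blast
  moreover have "mat_diag (2^N) d + mat_diag (2^N) e = mat_diag (2^N) (\<lambda>i. d i + e i)"
    by (rule eq_matI) (auto simp: mat_diag_def)
  ultimately show ?case using code_scalar_diag_add by blast
next
  case (smult S r)
  then obtain d where "S = mat_diag (2^N) d" "code_scalar_diag N \<theta> d" by blast
  moreover have "of_real r \<cdot>\<^sub>m mat_diag (2^N) d = mat_diag (2^N) (\<lambda>i. of_real r * d i)"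
    by (rule eq_matI) (auto simp: mat_diag_def)
  ultimately show ?case using code_scalar_diag_scale by blast
qed

theorem mainTheorem3:
  fixes N :: nat and \<theta> :: "nat \<Rightarrow> real"
  assumes N3: "N \<ge> 3"
  shows "braket (ket0L N \<theta>) (ket0L N \<theta>) = 1
       \<and> braket (ket1L N \<theta>) (ket1L N \<theta>) = 1
       \<and> braket (ket0L N \<theta>) (ket1L N \<theta>) = 0
       \<and> (\<forall>v :: nat \<Rightarrow> real.
            codeP N \<theta> * vdotZ N v * codeP N \<theta>
              = complex_of_real (rdot N v (\<lambda>j. cos (2 * \<theta> j))) \<cdot>\<^sub>m codeZL N \<theta>)
       \<and> (\<forall>v u :: nat \<Rightarrow> real. \<exists>r :: real.
            codeP N \<theta> * vdotZ N v * vdotZ N u * codeP N \<theta>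
              = complex_of_real r \<cdot>\<^sub>m codeP N \<theta>)
       \<and> (\<forall>(C :: nat \<Rightarrow> nat \<Rightarrow> real) (V :: nat \<Rightarrow> nat \<Rightarrow> real) (lam :: nat \<Rightarrow> real) (h :: nat \<Rightarrow> real).
            (\<forall>i<N. \<forall>j<N. C i j = C j i)
            \<longrightarrow> (\<forall>x. (\<Sum>i<N. \<Sum>j<N. x i * C i j * x j) \<ge> 0)
            \<longrightarrow> (\<forall>k<N. \<forall>l<N. rdot N (V k) (V l) = (if k = l then 1 else 0))
            \<longrightarrow> (\<forall>k<N. \<forall>i<N. matvec N C (V k) i = lam k * V k i)
            \<longrightarrow> (\<forall>k<N. lam k \<ge> 0)
            \<longrightarrow> (\<forall>w \<in> colspace N C. rdot N (\<lambda>j. cos (2 * \<theta> j)) w = 0)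
            \<longrightarrow> (\<forall>S \<in> lindblad_span N lam V. \<exists>r :: real.
                   codeP N \<theta> * S * codeP N \<theta> = complex_of_real r \<cdot>\<^sub>m codeP N \<theta>)
              \<and> codeP N \<theta> * hamH N h * codeP N \<theta>
                  = complex_of_real (1/2 * rdot N h (\<lambda>j. cos (2 * \<theta> j))) \<cdot>\<^sub>m codeZL N \<theta>)"
proof -
  have N2: "N \<ge> 2" using N3 by simp
  have lindblad: "\<exists>r::real. codeP N \<theta> * S * codeP N \<theta> = of_real r \<cdot>\<^sub>m codeP N \<theta>"
    if "\<forall>k<N. \<forall>i<N. matvec N C (V k) i = lam k * V k i"
      and "\<forall>w \<in> colspace N C. rdot N (\<lambda>j. cos (2 * \<theta> j)) w = 0"
      and "S \<in> lindblad_span N lam V" for C V lam S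
    using lindblad_span_code_scalar_diag[OF N3 that] codeP_compress_code_scalar_diag by blast
  show ?thesis
    using code_orthonormal[of N \<theta>] N3 codeP_vdotZ_codeP[OF N2] codeP_vdotZ_vdotZ_codeP[OF N3]
      codeP_hamH_codeP[OF N2] lindblad
    by simp
qed

end
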